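(* Let $\mathbb{K}$ be an algebraically closed field, and let $f(x), g(x) \in \mathbb{K}[x]$ be monic polynomials, with $d = \deg f \geq 1$. Assume $f$ is squarefree, and let $\mathcal{Z}(f)$ and $\mathcal{Z}(g)$ denote the sets of roots of $f$ and $g$. Define \[ s(x) = \prod_{\zeta \in \mathcal{Z}(f) \setminus (\mathcal{Z}(f) \cap \mathcal{Z}(g))} (x - \zeta). \] Let $M_g$ be the $d \times d$ matrix, in the monomial basis $1, x, \ldots, x^{d-1}$ of $\mathbb{A} = \mathbb{K}[x]/(f)$, of the map $h \mapsto \pi(gh)$, where $\pi(p)$ is the remainder of $p$ modulo $f$. Suppose $\ker(M_g) \neq 0$. Let $K_g$ be a matrix whose columns form a basis of $\ker(M_g)$, and consider a column echelon form of $K_g$. Then the first column of this column echelon form is, up to multiplication by a nonzero scalar, the coefficient vector of $s(x)$ in the basis $1, x, \ldots, x^{d-1}$.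
   Context: A vector $(c_0, \ldots, c_{d-1})^T \in \mathbb{K}^d$ is identified with the polynomial $c_0 + c_1 x + \cdots + c_{d-1} x^{d-1}$. A column echelon form of $K_g$ is a matrix obtained from $K_g$ by elementary column operations, in which the columns are nonzero and the polynomials associated to the columns have strictly increasing degrees from the first column to the last. In particular, the first column has the smallest degree. *)

theory Defs
  imports "HOL-Computational_Algebra.Computational_Algebra"
begin

text \<open>Vectors (c_0,...,c_{d-1}) in K^d are identified with polynomials of degree < d
  (the zero polynomial included). Under this identification the matrix M_g of
  h |-> pi(g h) in the monomial basis acts as h |-> (g * h) mod f.\<close>

definition vecs :: "nat \<Rightarrow> 'a::field poly set" where
  "vecs d = {h. degree h < d}"

definition mult_map :: "'a::field poly \<Rightarrow> 'a poly \<Rightarrow> 'a poly \<Rightarrow> 'a poly" where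
  "mult_map f g h = (g * h) mod f"

definition ker_M :: "'a::field poly \<Rightarrow> 'a poly \<Rightarrow> 'a poly set" where
  "ker_M f g = {h \<in> vecs (degree f). mult_map f g h = 0}"

text \<open>A matrix is represented as the list of its columns.\<close>
definition lin_comb :: "('a::field) list \<Rightarrow> 'a poly list \<Rightarrow> 'a poly" where
  "lin_comb cs xs = (\<Sum>i<length xs. smult (cs ! i) (xs ! i))"

definition col_span :: "'a::field poly list \<Rightarrow> 'a poly set" where
  "col_span xs = {lin_comb cs xs | cs. length cs = length xs}"

definition lin_indep :: "'a::field poly list \<Rightarrow> bool" where
  "lin_indep xs = (\<forall>cs. length cs = length xs \<longrightarrow> lin_comb cs xs = 0 \<longrightarrow> (\<forall>c\<in>set cs. c = 0))"

definition is_basis_cols :: "'a::field poly list \<Rightarrow> 'a poly set \<Rightarrow> bool" where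
  "is_basis_cols xs V = (lin_indep xs \<and> col_span xs = V)"

inductive elem_col_op :: "'a::field poly list \<Rightarrow> 'a poly list \<Rightarrow> bool" where
  swap: "i < length xs \<Longrightarrow> j < length xs \<Longrightarrow>
           elem_col_op xs (xs[i := xs ! j, j := xs ! i])"
| scale: "i < length xs \<Longrightarrow> c \<noteq> 0 \<Longrightarrow>
           elem_col_op xs (xs[i := smult c (xs ! i)])"
| add: "i < length xs \<Longrightarrow> j < length xs \<Longrightarrow> i \<noteq> j \<Longrightarrow>
           elem_col_op xs (xs[i := xs ! i + smult c (xs ! j)])"

definition col_echelon_form_of :: "'a::field poly list \<Rightarrow> 'a poly list \<Rightarrow> bool" where
  "col_echelon_form_of E K \<longleftrightarrow>
     elem_col_op\<^sup>*\<^sup>* K E \<and> (\<forall>e\<in>set E. e \<noteq> 0) \<and> sorted_wrt (<) (map degree E)"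

end

theory Submission
  imports Defs
begin

text \<open>Every element of the kernel of \<open>M\<^sub>g\<close> vanishes at the roots of \<open>f\<close> that are not roots
  of \<open>g\<close>, so it is a multiple of \<open>s\<close>; conversely \<open>f\<close>, being squarefree over an algebraically
  closed field, divides \<open>g s\<close>, so \<open>s\<close> lies in the kernel as soon as the kernel is nontrivial.
  Thus \<open>s\<close> is, up to scalars, the unique nonzero kernel element of least degree. Elementary
  column operations preserve the column span, and in a column echelon form the first column
  has the least degree among all nonzero elements of that span; hence it is a multiple
  of \<open>s\<close>.\<close>

lemma smult_sum_right: "smult a (sum f A) = (\<Sum>i\<in>A. smult a (f i))"
  by (induction A rule: infinite_finite_induct) (auto simp: smult_add_right)

lemma col_span_conv_range: "col_span xs = range (\<lambda>c. \<Sum>i<length xs. smult (c i) (xs ! i))"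
proof (intro set_eqI iffI)
  fix x assume "x \<in> col_span xs"
  then obtain cs where "length cs = length xs" "x = lin_comb cs xs"
    by (auto simp: col_span_def)
  then show "x \<in> range (\<lambda>c. \<Sum>i<length xs. smult (c i) (xs ! i))"
    by (auto simp: lin_comb_def)
next
  fix x assume "x \<in> range (\<lambda>c. \<Sum>i<length xs. smult (c i) (xs ! i))"
  then obtain c where x: "x = (\<Sum>i<length xs. smult (c i) (xs ! i))" by auto
  have "x = lin_comb (map c [0..<length xs]) xs"
    unfolding x lin_comb_def by (intro sum.cong) auto
  then show "x \<in> col_span xs" unfolding col_span_def by force
qed

lemma col_span_Nil [simp]: "col_span [] = {0}"
  by (simp add: col_span_conv_range)

lemma col_span_Cons: "col_span (x # xs) = {smult a x + y | a y. y \<in> col_span xs}"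
proof (intro set_eqI iffI)
  fix z assume "z \<in> col_span (x # xs)"
  then obtain c where "z = (\<Sum>i<Suc (length xs). smult (c i) ((x # xs) ! i))"
    by (auto simp: col_span_conv_range)
  then have "z = smult (c 0) x + (\<Sum>i<length xs. smult (c (Suc i)) (xs ! i))"
    by (simp only: sum.lessThan_Suc_shift nth_Cons_0 nth_Cons_Suc)
  then show "z \<in> {smult a x + y | a y. y \<in> col_span xs}"
    by (auto simp: col_span_conv_range intro!: rangeI)
next
  fix z assume "z \<in> {smult a x + y | a y. y \<in> col_span xs}"
  then obtain a d where z: "z = smult a x + (\<Sum>i<length xs. smult (d i) (xs ! i))"
    by (auto simp: col_span_conv_range)
  let ?c = "\<lambda>i. case i of 0 \<Rightarrow> a | Suc j \<Rightarrow> d j"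
  have "z = (\<Sum>i<Suc (length xs). smult (?c i) ((x # xs) ! i))"
    unfolding z by (simp only: sum.lessThan_Suc_shift nth_Cons_0 nth_Cons_Suc nat.case)
  then show "z \<in> col_span (x # xs)"
    by (auto simp: col_span_conv_range)
qed

lemma zero_in_col_span: "0 \<in> col_span xs"
  unfolding col_span_conv_range by (rule range_eqI[of _ _ "\<lambda>_. 0"]) simp

lemma col_span_add: "x \<in> col_span xs \<Longrightarrow> y \<in> col_span xs \<Longrightarrow> x + y \<in> col_span xs"
proof -
  assume "x \<in> col_span xs" "y \<in> col_span xs"
  then obtain c d where "x = (\<Sum>i<length xs. smult (c i) (xs ! i))"
      "y = (\<Sum>i<length xs. smult (d i) (xs ! i))"
    unfolding col_span_conv_range by auto
  then have "x + y = (\<Sum>i<length xs. smult (c i + d i) (xs ! i))"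
    by (simp add: sum.distrib smult_add_left)
  then show ?thesis unfolding col_span_conv_range by (rule range_eqI[of _ _ "\<lambda>i. c i + d i"])
qed

lemma col_span_smult: "x \<in> col_span xs \<Longrightarrow> smult a x \<in> col_span xs"
proof -
  assume "x \<in> col_span xs"
  then obtain c where "x = (\<Sum>i<length xs. smult (c i) (xs ! i))"
    unfolding col_span_conv_range by auto
  then have "smult a x = (\<Sum>i<length xs. smult (a * c i) (xs ! i))"
    by (simp add: smult_sum_right)
  then show ?thesis unfolding col_span_conv_range by (rule range_eqI[of _ _ "\<lambda>i. a * c i"])
qed

lemma col_span_sum:
  "finite A \<Longrightarrow> (\<And>i. i \<in> A \<Longrightarrow> f i \<in> col_span xs) \<Longrightarrow> sum f A \<in> col_span xs"
  by (induction A rule: finite_induct) (auto intro: zero_in_col_span col_span_add)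

lemma set_subset_col_span: "set xs \<subseteq> col_span xs"
proof
  fix x assume "x \<in> set xs"
  then obtain k where k: "k < length xs" "x = xs ! k" by (auto simp: in_set_conv_nth)
  have "x = (\<Sum>i<length xs. smult (if i = k then 1 else 0) (xs ! i))"
    using k by (simp add: if_distrib[of "\<lambda>a. smult a _"] cong: if_cong)
  then show "x \<in> col_span xs"
    unfolding col_span_conv_range by (rule range_eqI[of _ _ "\<lambda>i. if i = k then 1 else 0"])
qed

lemma col_span_subset: "set ys \<subseteq> col_span xs \<Longrightarrow> col_span ys \<subseteq> col_span xs"
  unfolding col_span_conv_range[of ys] by (auto intro!: col_span_sum col_span_smult)

lemma col_span_eqI:
  assumes "set ys \<subseteq> col_span xs" "set xs \<subseteq> col_span ys"
  shows "col_span ys = col_span xs"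
  using assms by (intro equalityI col_span_subset)

lemma nth_in_col_span: "k < length xs \<Longrightarrow> xs ! k \<in> col_span xs"
  using set_subset_col_span by (blast intro: nth_mem)

lemma col_span_list_update_eq:
  assumes "i < length xs" "y \<in> col_span xs" "xs ! i \<in> col_span (xs[i := y])"
  shows "col_span (xs[i := y]) = col_span xs"
proof (rule col_span_eqI)
  show "set (xs[i := y]) \<subseteq> col_span xs"
    using assms(2) set_update_subset_insert[of xs i y] set_subset_col_span[of xs] by blast
  have "xs ! k \<in> col_span (xs[i := y])" if "k < length xs" for k
    using assms(3) nth_in_col_span[of k "xs[i := y]"] that by (cases "k = i") auto
  then show "set xs \<subseteq> col_span (xs[i := y])" by (auto simp: in_set_conv_nth)
qed

lemma col_span_elem_col_op: "elem_col_op xs ys \<Longrightarrow> col_span ys = col_span xs"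
proof (induction rule: elem_col_op.induct)
  case (swap i xs j)
  then have "set (xs[i := xs ! j, j := xs ! i]) = set xs"
    by (auto simp: in_set_conv_nth nth_list_update)
  then show ?case by (metis col_span_eqI set_subset_col_span)
next
  case (scale i xs c)
  let ?ys = "xs[i := smult c (xs ! i)]"
  have "smult (inverse c) (?ys ! i) \<in> col_span ?ys"
    using scale by (intro col_span_smult nth_in_col_span) simp
  with scale show ?case
    by (intro col_span_list_update_eq col_span_smult nth_in_col_span) simp_all
next
  case (add i xs j c)
  let ?ys = "xs[i := xs ! i + smult c (xs ! j)]"
  have "?ys ! i + smult (- c) (?ys ! j) \<in> col_span ?ys"
    using add by (intro col_span_add col_span_smult nth_in_col_span) simp_all
  with add show ?case
    by (intro col_span_list_update_eq col_span_add col_span_smult nth_in_col_span) simp_all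
qed

lemma col_span_elem_col_ops: "elem_col_op\<^sup>*\<^sup>* xs ys \<Longrightarrow> col_span ys = col_span xs"
  by (induction rule: rtranclp_induct) (auto dest: col_span_elem_col_op)

lemma degree_hd_le_col_span:
  assumes "sorted_wrt (<) (map degree xs)" "h \<in> col_span xs" "h \<noteq> 0"
  shows "degree (hd xs) \<le> degree h"
  using assms
proof (induction xs arbitrary: h)
  case Nil
  then show ?case by simp
next
  case (Cons x xs)
  then obtain a y where h: "h = smult a x + y" and y: "y \<in> col_span xs"
    by (auto simp: col_span_Cons)
  show ?case
  proof (cases "y = 0")
    case True
    with Cons.prems h show ?thesis by (cases "a = 0") auto
  next
    case False
    with y have "xs \<noteq> []" by auto
    with Cons.prems have x: "degree x < degree (hd xs)" by (cases xs) auto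
    have y_deg: "degree (hd xs) \<le> degree y"
      using Cons False y by simp
    have "degree (smult a x) < degree y"
      using x y_deg degree_smult_le[of a x] by linarith
    then have "degree h = degree y"
      unfolding h by (rule degree_add_eq_right)
    with x y_deg show ?thesis by simp
  qed
qed

lemma prod_linear_factors_dvd:
  fixes p :: "'a::field poly"
  assumes "finite S" "\<And>z. z \<in> S \<Longrightarrow> poly p z = 0"
  shows "(\<Prod>z\<in>S. [:- z, 1:]) dvd p"
  using assms
proof (induction S rule: finite_induct)
  case empty
  then show ?case by simp
next
  case (insert a S)
  then obtain q where q: "p = (\<Prod>z\<in>S. [:- z, 1:]) * q" by (auto elim: dvdE)
  from insert have "poly (\<Prod>z\<in>S. [:- z, 1:]) a \<noteq> 0" by (auto simp: poly_prod)
  moreover have "poly p a = 0" using insert.prems by simp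
  ultimately have "poly q a = 0" unfolding q by simp
  then have "[:- a, 1:] dvd q" by (simp add: poly_eq_0_iff_dvd)
  then have "[:- a, 1:] * (\<Prod>z\<in>S. [:- z, 1:]) dvd p"
    unfolding q mult.commute[of "[:- a, 1:]"] by (rule mult_dvd_mono[OF dvd_refl])
  with insert.hyps show ?case by simp
qed

lemma squarefree_dvd_if_roots:
  fixes f p :: "'a::alg_closed_field poly"
  assumes "squarefree f" and roots: "\<And>z. poly f z = 0 \<Longrightarrow> poly p z = 0"
  shows "f dvd p"
proof -
  define P where "P = (\<Prod>z\<in>{z. poly f z = 0}. [:- z, 1:])"
  have "f \<noteq> 0" using \<open>squarefree f\<close> by auto
  then have fin: "finite {z. poly f z = 0}" by (rule poly_roots_finite)
  then have "P dvd f" unfolding P_def by (intro prod_linear_factors_dvd) auto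
  then obtain q where f: "f = P * q" by (auto elim: dvdE)
  have "degree q = 0"
  proof (rule ccontr)
    assume "degree q \<noteq> 0"
    then obtain a where a: "poly q a = 0" using alg_closed_imp_poly_has_root by blast
    then have "[:- a, 1:] dvd P" unfolding P_def using fin f by (intro dvd_prodI) auto
    moreover have "[:- a, 1:] dvd q" using a by (simp add: poly_eq_0_iff_dvd)
    ultimately have "[:- a, 1:] ^ 2 dvd f" unfolding f power2_eq_square by (rule mult_dvd_mono)
    with \<open>squarefree f\<close> have "is_unit [:- a, 1:]" by (rule squarefreeD)
    then show False by (simp add: is_unit_iff_degree)
  qed
  with f \<open>f \<noteq> 0\<close> have "is_unit q" by (auto simp: is_unit_iff_degree)
  moreover have "P dvd p" unfolding P_def using fin roots by (intro prod_linear_factors_dvd) auto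
  ultimately show ?thesis unfolding f by (simp add: mult_unit_dvd_iff)
qed

lemma dvd_degree_le_imp_smult:
  fixes s h :: "'a::field poly"
  assumes "s dvd h" "h \<noteq> 0" "degree h \<le> degree s"
  shows "\<exists>c. c \<noteq> 0 \<and> h = smult c s"
proof -
  from assms(1) obtain r where h: "h = s * r" by (auto elim: dvdE)
  with assms have "degree r = 0" by (auto simp: degree_mult_eq)
  then obtain c where "r = [:c:]" by (rule degree_eq_zeroE)
  with h assms(2) show ?thesis by auto
qed

definition unshared_roots_poly :: "'a::field poly \<Rightarrow> 'a poly \<Rightarrow> 'a poly" where
  "unshared_roots_poly f g =
     (\<Prod>\<zeta>\<in>{x. poly f x = 0} - ({x. poly f x = 0} \<inter> {x. poly g x = 0}). [:- \<zeta>, 1:])"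

lemma lead_coeff_unshared_roots_poly: "lead_coeff (unshared_roots_poly f g) = 1"
  by (simp add: unshared_roots_poly_def lead_coeff_prod)

lemma unshared_roots_poly_dvd_ker_M:
  assumes "f \<noteq> 0" "h \<in> ker_M f g"
  shows "unshared_roots_poly f g dvd h"
  unfolding unshared_roots_poly_def
proof (rule prod_linear_factors_dvd)
  show "finite ({x. poly f x = 0} - ({x. poly f x = 0} \<inter> {x. poly g x = 0}))"
    using poly_roots_finite[OF \<open>f \<noteq> 0\<close>] by simp
  from assms(2) have "f dvd g * h" by (simp add: ker_M_def mult_map_def mod_eq_0_iff_dvd)
  then show "poly h z = 0" if "z \<in> {x. poly f x = 0} - ({x. poly f x = 0} \<inter> {x. poly g x = 0})" for z
    using that by (auto elim!: dvdE dest: arg_cong[where f = "\<lambda>p. poly p z"])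
qed

lemma squarefree_dvd_mult_unshared_roots_poly:
  fixes f g :: "'a::alg_closed_field poly"
  assumes "squarefree f"
  shows "f dvd g * unshared_roots_poly f g"
proof (rule squarefree_dvd_if_roots[OF assms])
  have "finite {x. poly f x = 0}" using assms by (intro poly_roots_finite) auto
  then show "poly (g * unshared_roots_poly f g) z = 0" if "poly f z = 0" for z
    using that by (auto simp: unshared_roots_poly_def poly_prod)
qed

lemma unshared_roots_poly_in_ker_M:
  fixes f g :: "'a::alg_closed_field poly"
  assumes "squarefree f" "h \<in> ker_M f g" "h \<noteq> 0"
  shows "unshared_roots_poly f g \<in> ker_M f g"
proof -
  have "f \<noteq> 0" using assms(1) by auto
  then have "degree (unshared_roots_poly f g) \<le> degree h"
    using unshared_roots_poly_dvd_ker_M assms(2,3) by (intro dvd_imp_degree_le)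
  also have "degree h < degree f" using assms(2) by (simp add: ker_M_def vecs_def)
  finally show ?thesis
    using squarefree_dvd_mult_unshared_roots_poly[OF assms(1), of g]
    by (simp add: ker_M_def vecs_def mult_map_def mod_eq_0_iff_dvd)
qed

theorem mainTheorem4:
  fixes f g :: "'a::alg_closed_field poly"
    and K E :: "'a poly list"
  assumes "lead_coeff f = 1" and "lead_coeff g = 1" and "degree f \<ge> 1"
    and "squarefree f"
    and "ker_M f g \<noteq> {0}"
    and "is_basis_cols K (ker_M f g)"
    and "col_echelon_form_of E K"
  shows "\<exists>c. c \<noteq> 0 \<and> hd E =
           smult c (\<Prod>\<zeta>\<in>{x. poly f x = 0} - ({x. poly f x = 0} \<inter> {x. poly g x = 0}). [:- \<zeta>, 1:])"
proof -
  let ?s = "unshared_roots_poly f g"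
  have echelon: "elem_col_op\<^sup>*\<^sup>* K E" "\<forall>e\<in>set E. e \<noteq> 0" "sorted_wrt (<) (map degree E)"
    using assms(7) by (simp_all add: col_echelon_form_of_def)
  have span: "col_span E = ker_M f g"
    using col_span_elem_col_ops[OF echelon(1)] assms(6) by (simp add: is_basis_cols_def)
  with assms(5) have "E \<noteq> []" by (metis col_span_Nil)
  then have "hd E \<in> set E" by (rule hd_in_set)
  then have hd_ker: "hd E \<in> ker_M f g" and hd_nonzero: "hd E \<noteq> 0"
    using span set_subset_col_span[of E] echelon(2) by blast+
  have "f \<noteq> 0" using assms(4) by auto
  then have "?s dvd hd E" using hd_ker by (rule unshared_roots_poly_dvd_ker_M)
  moreover have "?s \<noteq> 0"
    using lead_coeff_unshared_roots_poly[of f g] by auto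
  then have "degree (hd E) \<le> degree ?s"
    using echelon(3) span unshared_roots_poly_in_ker_M[OF assms(4) hd_ker hd_nonzero]
    by (intro degree_hd_le_col_span) simp_all
  ultimately have "\<exists>c. c \<noteq> 0 \<and> hd E = smult c ?s"
    using hd_nonzero by (intro dvd_degree_le_imp_smult)
  then show ?thesis unfolding unshared_roots_poly_def .
qed

end
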